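(* Let $\Gamma=\mathsf{PSL}_2(\mathbb{Z})=\langle U,S\mid U^3,S^2\rangle$, where $U$ has order $3$ and $S$ has order $2$. For integers $n,m\ge 0$ let $q(n,m)$ be the number of words in the alphabet $\{U,S\}$ containing exactly $n$ letters $U$ and $m$ letters $S$ which are equal to the identity in $\Gamma$ (the empty word counts, so $q(0,0)=1$). Let $$Q(x,y)=\sum_{n,m\ge 0}q(n,m)x^ny^m,\qquad T(x)=Q(x,x)=\sum_{n\ge0}t(n)x^n,$$ where $t(n)$ is the number of words of length $n$ in $\{U,S\}$ equal to the identity in $\Gamma$. Then $Q(x,y)$ is an algebraic function of degree $3$ over $\mathbb{Q}(x,y)$ satisfying $$(y^6-x^6+6y^2x^3-3y^4+2x^3+3y^2-1)Q^3+(x^3y^2-y^4+x^3+2y^2-1)Q^2+(x^3-y^2+1)Q+1=0.$$ In particular, $T(x)$ is an algebraic function of degree $3$ over $\mathbb{Q}(x)$ satisfying $$(6x^5-3x^4+2x^3+3x^2-1)T^3+(x^5-x^4+x^3+2x^2-1)T^2+(x^3-x^2+1)T+1=0.$$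
   Context: Words are finite sequences over the two-letter alphabet $\{U,S\}$, interpreted as products of the corresponding group elements in $\Gamma$. The generating functions are formal power series (convergent for small $|x|,|y|$). *)

theory Defs
  imports Complex_Main "HOL-Computational_Algebra.Polynomial_FPS"
begin

datatype letter = U | S

text \<open>2x2 integer matrices (a,b,c,d) = [[a,b],[c,d]] with matrix multiplication.\<close>
type_synonym mat2 = "int \<times> int \<times> int \<times> int"

definition mat2_mult :: "mat2 \<Rightarrow> mat2 \<Rightarrow> mat2" where
  "mat2_mult A B = (case A of (a,b,c,d) \<Rightarrow> case B of (e,f,g,h) \<Rightarrow>
      (a*e + b*g, a*f + b*h, c*e + d*g, c*f + d*h))"

definition mat2_id :: mat2 where "mat2_id = (1,0,0,1)"

text \<open>Lifts to SL2(Z) of the generators of PSL2(Z): U of order 3, S of order 2.\<close>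
fun letter_mat :: "letter \<Rightarrow> mat2" where
  "letter_mat U = (0,-1,1,1)"
| "letter_mat S = (0,-1,1,0)"

definition word_mat :: "letter list \<Rightarrow> mat2" where
  "word_mat w = foldr (\<lambda>l M. mat2_mult (letter_mat l) M) w mat2_id"

text \<open>A word is trivial in PSL2(Z) = SL2(Z)/{+-1} iff its matrix is +-I.\<close>
definition trivial_in_Gamma :: "letter list \<Rightarrow> bool" where
  "trivial_in_Gamma w \<longleftrightarrow> word_mat w = (1,0,0,1) \<or> word_mat w = (-1,0,0,-1)"

definition q :: "nat \<Rightarrow> nat \<Rightarrow> nat" where
  "q n m = card {w. length (filter (\<lambda>l. l = U) w) = n \<and> length (filter (\<lambda>l. l = S) w) = m
                    \<and> trivial_in_Gamma w}"

definition t :: "nat \<Rightarrow> nat" where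
  "t n = card {w. length w = n \<and> trivial_in_Gamma w}"

text \<open>Bivariate series: outer variable y, coefficients are series in x.
  Q = sum_m (sum_n q(n,m) x^n) y^m.\<close>
definition Qser :: "rat fps fps" where
  "Qser = Abs_fps (\<lambda>m. Abs_fps (\<lambda>n. of_nat (q n m)))"

definition Tser :: "rat fps" where
  "Tser = Abs_fps (\<lambda>n. of_nat (t n))"

definition xx :: "rat fps fps" where "xx = fps_const fps_X"
definition yy :: "rat fps fps" where "yy = fps_X"

text \<open>Embedding of Q[x][y] (polys in y with coefficients polys in x) into the series ring.\<close>
definition embed2 :: "rat poly poly \<Rightarrow> rat fps fps" where
  "embed2 p = fps_of_poly (map_poly fps_of_poly p)"

end

theory Submission
  imports Defs "HOL-Computational_Algebra.Polynomial_Factorial" "HOL-Computational_Algebra.Field_as_Ring"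
begin

(* Words act by right multiplication on normal forms of \<Gamma> = Z/2 * Z/3, i.e. on alternating
   sequences of syllables S and U, U^2; ping-pong on the quadrants of Z^2 shows that only the empty
   normal form is trivial. So Q is the unique solution of a first-letter recursion over normal forms,
   and that recursion is also solved by Q u_a1 ... u_ak, where u_S, u_U, u_UU, Q solve the polynomial
   system u_S = y + x u_U u_S, u_U = x u_UU + y u_S u_U, u_UU = x + y u_S u_UU,
   Q = 1 + x u_U Q + y u_S Q. Eliminating the u's gives the cubic for Q, and restriction to the
   diagonal y = x, a ring homomorphism, gives the cubic for T.
   The cubic for T has no root p/r in Q(x): coprimality forces p to be a constant, and then x = 1
   leads to a rational root of z^3 + z^2 + 2z + 7, impossible by parity. Hence it is irreducible.
   A quadratic relation for Q over Q[x,y] can be freed of common factors y - x and then restricts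
   to a nontrivial quadratic relation for T. *)

unbundle fps_syntax

lemma mat2_mult_assoc: "mat2_mult (mat2_mult A B) C = mat2_mult A (mat2_mult B C)"
  by (cases A; cases B; cases C) (simp add: mat2_mult_def algebra_simps)

lemma mat2_mult_id_left [simp]: "mat2_mult mat2_id A = A"
  by (cases A) (simp add: mat2_mult_def mat2_id_def)

definition mat2_neg :: "mat2 \<Rightarrow> mat2" where
  "mat2_neg A = (case A of (a, b, c, d) \<Rightarrow> (-a, -b, -c, -d))"

lemma mat2_neg_neg [simp]: "mat2_neg (mat2_neg A) = A"
  by (cases A) (simp add: mat2_neg_def)

lemma mat2_mult_neg_left: "mat2_mult (mat2_neg A) B = mat2_neg (mat2_mult A B)"
  by (cases A; cases B) (simp add: mat2_mult_def mat2_neg_def algebra_simps)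

definition is_pm_id :: "mat2 \<Rightarrow> bool" where
  "is_pm_id A \<longleftrightarrow> A = (1, 0, 0, 1) \<or> A = (-1, 0, 0, -1)"

lemma is_pm_id_neg [simp]: "is_pm_id (mat2_neg A) = is_pm_id A"
  by (cases A) (auto simp: is_pm_id_def mat2_neg_def)

subsection \<open>Normal forms in PSL2(Z)\<close>

text \<open>A normal form is stored with its rightmost syllable first, so that multiplying by a letter
  on the right only touches the head of the list.\<close>

datatype syllable = SylS | SylU | SylUU

fun is_U_syllable :: "syllable \<Rightarrow> bool" where
  "is_U_syllable SylS = False"
| "is_U_syllable SylU = True"
| "is_U_syllable SylUU = True"

fun syllable_mat :: "syllable \<Rightarrow> mat2" where
  "syllable_mat SylS = (0, -1, 1, 0)"
| "syllable_mat SylU = (0, -1, 1, 1)"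
| "syllable_mat SylUU = (-1, -1, 1, 0)"

fun nf_mat :: "syllable list \<Rightarrow> mat2" where
  "nf_mat [] = mat2_id"
| "nf_mat (a # s) = mat2_mult (nf_mat s) (syllable_mat a)"

fun alternating :: "syllable list \<Rightarrow> bool" where
  "alternating (a # b # s) \<longleftrightarrow> is_U_syllable a \<noteq> is_U_syllable b \<and> alternating (b # s)"
| "alternating _ \<longleftrightarrow> True"

fun nf_times_U :: "syllable list \<Rightarrow> syllable list" where
  "nf_times_U [] = [SylU]"
| "nf_times_U (SylS # s) = SylU # SylS # s"
| "nf_times_U (SylU # s) = SylUU # s"
| "nf_times_U (SylUU # s) = s"

fun nf_times_S :: "syllable list \<Rightarrow> syllable list" where
  "nf_times_S [] = [SylS]"
| "nf_times_S (SylS # s) = s"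
| "nf_times_S (a # s) = SylS # a # s"

lemma alternating_tl: "alternating (a # s) \<Longrightarrow> alternating s"
  by (cases s) auto

lemma alternating_replace_hd:
  "alternating (a # s) \<Longrightarrow> is_U_syllable a = is_U_syllable b \<Longrightarrow> alternating (b # s)"
  by (cases s) auto

lemma alternating_nf_times_U: "alternating s \<Longrightarrow> alternating (nf_times_U s)"
  by (cases s rule: nf_times_U.cases) (auto dest: alternating_tl intro: alternating_replace_hd)

lemma alternating_nf_times_S: "alternating s \<Longrightarrow> alternating (nf_times_S s)"
  by (cases s rule: nf_times_S.cases) (auto dest: alternating_tl)

lemma nf_mat_nf_times_U:
  "nf_mat (nf_times_U s) = mat2_mult (nf_mat s) (letter_mat U) \<or>
   nf_mat (nf_times_U s) = mat2_neg (mat2_mult (nf_mat s) (letter_mat U))"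
proof (cases s rule: nf_times_U.cases)
  case (3 s')
  then show ?thesis
    by (intro disjI1) (cases "nf_mat s'", simp add: mat2_mult_def)
next
  case (4 s')
  have "mat2_mult (mat2_mult (nf_mat s') (-1, -1, 1, 0)) (0, -1, 1, 1) = mat2_neg (nf_mat s')"
    by (simp add: mat2_mult_assoc) (cases "nf_mat s'", simp add: mat2_mult_def mat2_neg_def)
  then show ?thesis using 4 by simp
qed auto

lemma nf_mat_nf_times_S:
  "nf_mat (nf_times_S s) = mat2_mult (nf_mat s) (letter_mat S) \<or>
   nf_mat (nf_times_S s) = mat2_neg (mat2_mult (nf_mat s) (letter_mat S))"
proof (cases s rule: nf_times_S.cases)
  case (2 s')
  have "mat2_mult (mat2_mult (nf_mat s') (0, -1, 1, 0)) (0, -1, 1, 0) = mat2_neg (nf_mat s')"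
    by (simp add: mat2_mult_assoc) (cases "nf_mat s'", simp add: mat2_mult_def mat2_neg_def)
  then show ?thesis using 2 by simp
qed auto

fun row_mult :: "int \<times> int \<Rightarrow> mat2 \<Rightarrow> int \<times> int" where
  "row_mult (x, y) (a, b, c, d) = (x * a + y * c, x * b + y * d)"

lemma row_mult_mat2_mult: "row_mult v (mat2_mult A B) = row_mult (row_mult v A) B"
  by (cases v; cases A; cases B) (simp add: mat2_mult_def algebra_simps)

fun same_signs :: "int \<times> int \<Rightarrow> bool" where
  "same_signs (a, b) \<longleftrightarrow> a > 0 \<and> b > 0 \<or> a < 0 \<and> b < 0"

fun opposite_signs :: "int \<times> int \<Rightarrow> bool" where
  "opposite_signs (a, b) \<longleftrightarrow> a > 0 \<and> b < 0 \<or> a < 0 \<and> b > 0"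

fun l1_norm :: "int \<times> int \<Rightarrow> int" where
  "l1_norm (a, b) = \<bar>a\<bar> + \<bar>b\<bar>"

text \<open>The ping-pong sets: a \<open>U\<close>-syllable maps row vectors with coordinates of opposite signs to
  vectors with equal signs, increasing the \<open>l\<^sub>1\<close>-norm; \<open>S\<close> does the reverse without
  decreasing it.\<close>

definition syllable_source :: "syllable \<Rightarrow> int \<times> int \<Rightarrow> bool" where
  "syllable_source a v \<longleftrightarrow> (if is_U_syllable a then opposite_signs v else same_signs v)"

definition syllable_target :: "syllable \<Rightarrow> int \<times> int \<Rightarrow> bool" where
  "syllable_target a v \<longleftrightarrow> (if is_U_syllable a then same_signs v else opposite_signs v)"

lemma ping_pong_syllable:
  "syllable_source a v \<Longrightarrow> syllable_target a (row_mult v (syllable_mat a)) \<and>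
    l1_norm (row_mult v (syllable_mat a)) \<ge> l1_norm v + (if is_U_syllable a then 1 else 0)"
  by (cases v; cases a) (auto simp: syllable_source_def syllable_target_def)

lemma ping_pong:
  "alternating s \<Longrightarrow> s \<noteq> [] \<Longrightarrow> syllable_source (last s) v \<Longrightarrow>
    syllable_target (hd s) (row_mult v (nf_mat s)) \<and>
    l1_norm (row_mult v (nf_mat s)) \<ge> l1_norm v + (if is_U_syllable (hd s) \<or> length s \<ge> 2 then 1 else 0)"
proof (induction s)
  case Nil then show ?case by simp
next
  case (Cons a s)
  show ?case
  proof (cases s)
    case Nil
    then show ?thesis using Cons.prems ping_pong_syllable[of a v] by simp
  next
    case (Cons b s')
    have alt: "alternating s" using Cons.prems(1) by (rule alternating_tl)
    have kinds: "is_U_syllable a \<noteq> is_U_syllable b" using Cons.prems(1) \<open>s = b # s'\<close> by simp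
    have "syllable_source (last s) v" using Cons.prems(3) \<open>s = b # s'\<close> by simp
    with Cons.IH[OF alt] \<open>s = b # s'\<close>
    have IH: "syllable_target b (row_mult v (nf_mat s)) \<and>
        l1_norm (row_mult v (nf_mat s)) \<ge> l1_norm v + (if is_U_syllable b then 1 else 0)"
      by (auto split: if_splits)
    have "syllable_source a (row_mult v (nf_mat s))"
      using IH kinds by (cases a; cases b) (auto simp: syllable_source_def syllable_target_def)
    from ping_pong_syllable[OF this] IH kinds show ?thesis
      by (simp add: row_mult_mat2_mult) (cases a; cases b; auto)
  qed
qed

lemma nf_mat_not_pm_id: "alternating s \<Longrightarrow> s \<noteq> [] \<Longrightarrow> \<not> is_pm_id (nf_mat s)"
proof
  assume alt: "alternating s" and ne: "s \<noteq> []" and pm: "is_pm_id (nf_mat s)"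
  define v :: "int \<times> int" where "v = (if is_U_syllable (last s) then (1, -1) else (1, 1))"
  have "syllable_source (last s) v" by (simp add: v_def syllable_source_def)
  from ping_pong[OF alt ne this] have pp:
    "syllable_target (hd s) (row_mult v (nf_mat s)) \<and>
     l1_norm (row_mult v (nf_mat s)) \<ge> l1_norm v + (if is_U_syllable (hd s) \<or> length s \<ge> 2 then 1 else 0)" .
  have "row_mult v (nf_mat s) = v \<or> row_mult v (nf_mat s) = (- fst v, - snd v)"
    using pm by (cases v) (auto simp: is_pm_id_def)
  then have norm: "l1_norm (row_mult v (nf_mat s)) = l1_norm v"
    and signs: "same_signs (row_mult v (nf_mat s)) = same_signs v \<and>
                opposite_signs (row_mult v (nf_mat s)) = opposite_signs v"
    by (auto simp: v_def)
  from pp norm have "\<not> is_U_syllable (hd s)" "length s < 2" by (auto split: if_splits)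
  with ne have "s = [SylS]" by (cases s; cases "hd s") auto
  then show False using pp signs by (simp add: v_def syllable_target_def)
qed

lemma is_pm_id_nf_mat_iff: "alternating s \<Longrightarrow> is_pm_id (nf_mat s) \<longleftrightarrow> s = []"
  using nf_mat_not_pm_id[of s] by (auto simp: is_pm_id_def mat2_id_def)

definition count_U :: "letter list \<Rightarrow> nat" where
  "count_U w = length (filter (\<lambda>l. l = U) w)"

definition count_S :: "letter list \<Rightarrow> nat" where
  "count_S w = length (filter (\<lambda>l. l = S) w)"

lemma count_simps [simp]:
  "count_U [] = 0" "count_S [] = 0"
  "count_U (U # w) = Suc (count_U w)" "count_S (U # w) = count_S w"
  "count_U (S # w) = count_U w" "count_S (S # w) = Suc (count_S w)"
  by (simp_all add: count_U_def count_S_def)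

lemma length_eq_count_U_plus_count_S: "length w = count_U w + count_S w"
proof (induction w)
  case (Cons l w) then show ?case by (cases l) auto
qed simp

lemma finite_words_of_length: "finite {w :: letter list. length w = k}"
proof -
  have univ: "(UNIV :: letter set) = {U, S}"
    using letter.exhaust by auto
  have "finite (UNIV :: letter set)"
    by (subst univ) simp
  then show ?thesis using finite_lists_length_eq[of "UNIV :: letter set" k] by simp
qed

lemma word_mat_simps [simp]:
  "word_mat [] = mat2_id"
  "word_mat (l # w) = mat2_mult (letter_mat l) (word_mat w)"
  by (simp_all add: word_mat_def)

definition reducing_words :: "mat2 \<Rightarrow> nat \<Rightarrow> nat \<Rightarrow> letter list set" where
  "reducing_words M n m =
     {w. count_U w = n \<and> count_S w = m \<and> is_pm_id (mat2_mult M (word_mat w))}"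

definition num_reducing_words :: "mat2 \<Rightarrow> nat \<Rightarrow> nat \<Rightarrow> nat" where
  "num_reducing_words M n m = card (reducing_words M n m)"

lemma finite_reducing_words: "finite (reducing_words M n m)"
  by (rule finite_subset[OF _ finite_words_of_length[of "n + m"]])
    (auto simp: reducing_words_def length_eq_count_U_plus_count_S)

lemma num_reducing_words_neg: "num_reducing_words (mat2_neg M) n m = num_reducing_words M n m"
  by (simp add: num_reducing_words_def reducing_words_def mat2_mult_neg_left)

lemma reducing_words_first_letter:
  "reducing_words M n m =
     {w. w = [] \<and> n = 0 \<and> m = 0 \<and> is_pm_id M} \<union>
     (#) U ` {w. n > 0 \<and> w \<in> reducing_words (mat2_mult M (letter_mat U)) (n - 1) m} \<union>
     (#) S ` {w. m > 0 \<and> w \<in> reducing_words (mat2_mult M (letter_mat S)) n (m - 1)}"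
proof (rule set_eqI)
  fix w
  show "w \<in> reducing_words M n m \<longleftrightarrow> w \<in> {w. w = [] \<and> n = 0 \<and> m = 0 \<and> is_pm_id M} \<union>
     (#) U ` {w. n > 0 \<and> w \<in> reducing_words (mat2_mult M (letter_mat U)) (n - 1) m} \<union>
     (#) S ` {w. m > 0 \<and> w \<in> reducing_words (mat2_mult M (letter_mat S)) n (m - 1)}"
  proof (cases w)
    case Nil
    then show ?thesis
      by (cases M) (auto simp: reducing_words_def mat2_id_def mat2_mult_def)
  next
    case (Cons l w')
    then show ?thesis
      by (cases l) (auto simp: reducing_words_def mat2_mult_assoc simp del: letter_mat.simps)
  qed
qed

lemma num_reducing_words_rec:
  "num_reducing_words M n m = (if n = 0 \<and> m = 0 \<and> is_pm_id M then 1 else 0)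
     + (if n > 0 then num_reducing_words (mat2_mult M (letter_mat U)) (n - 1) m else 0)
     + (if m > 0 then num_reducing_words (mat2_mult M (letter_mat S)) n (m - 1) else 0)"
proof -
  let ?E = "{w :: letter list. w = [] \<and> n = 0 \<and> m = 0 \<and> is_pm_id M}"
  let ?WU = "{w. n > 0 \<and> w \<in> reducing_words (mat2_mult M (letter_mat U)) (n - 1) m}"
  let ?WS = "{w. m > 0 \<and> w \<in> reducing_words (mat2_mult M (letter_mat S)) n (m - 1)}"
  have fin: "finite ?E" "finite ?WU" "finite ?WS"
    by (auto intro: finite_subset[OF _ finite_reducing_words] finite_subset[of _ "{[]}"])
  have "num_reducing_words M n m = card (?E \<union> (#) U ` ?WU \<union> (#) S ` ?WS)"
    unfolding num_reducing_words_def by (subst reducing_words_first_letter) (rule refl)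
  also have "\<dots> = card ?E + card ((#) U ` ?WU) + card ((#) S ` ?WS)"
    using fin by (subst card_Un_disjoint, auto)+
  also have "\<dots> = card ?E + card ?WU + card ?WS"
    by (simp add: card_image)
  finally show ?thesis
    by (simp add: num_reducing_words_def)
qed

text \<open>In all bivariate series the outer index is the \<open>y\<close>-degree (number of letters \<open>S\<close>) and the
  inner index the \<open>x\<close>-degree (number of letters \<open>U\<close>), as in \<open>Qser\<close>.\<close>

definition nf_recursion :: "(syllable list \<Rightarrow> rat fps fps) \<Rightarrow> bool" where
  "nf_recursion K \<longleftrightarrow> (\<forall>s. alternating s \<longrightarrow> (\<forall>m n. K s $ m $ n =
      (if s = [] \<and> m = 0 \<and> n = 0 then 1 else 0)
      + (if n > 0 then K (nf_times_U s) $ m $ (n - 1) else 0)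
      + (if m > 0 then K (nf_times_S s) $ (m - 1) $ n else 0)))"

definition reducing_gf :: "syllable list \<Rightarrow> rat fps fps" where
  "reducing_gf s = Abs_fps (\<lambda>m. Abs_fps (\<lambda>n. of_nat (num_reducing_words (nf_mat s) n m)))"

lemma num_reducing_words_nf_times_U:
  "num_reducing_words (mat2_mult (nf_mat s) (letter_mat U)) n m
     = num_reducing_words (nf_mat (nf_times_U s)) n m"
  using nf_mat_nf_times_U[of s] by (auto simp: num_reducing_words_neg)

lemma num_reducing_words_nf_times_S:
  "num_reducing_words (mat2_mult (nf_mat s) (letter_mat S)) n m
     = num_reducing_words (nf_mat (nf_times_S s)) n m"
  using nf_mat_nf_times_S[of s] by (auto simp: num_reducing_words_neg)

lemma nf_recursion_reducing_gf: "nf_recursion reducing_gf"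
  unfolding nf_recursion_def
proof (intro allI impI)
  fix s m n assume "alternating s"
  then show "reducing_gf s $ m $ n = (if s = [] \<and> m = 0 \<and> n = 0 then 1 else 0)
      + (if n > 0 then reducing_gf (nf_times_U s) $ m $ (n - 1) else 0)
      + (if m > 0 then reducing_gf (nf_times_S s) $ (m - 1) $ n else 0)"
    using num_reducing_words_rec[of "nf_mat s" n m] is_pm_id_nf_mat_iff[of s]
    by (simp add: reducing_gf_def num_reducing_words_nf_times_U num_reducing_words_nf_times_S
        del: letter_mat.simps)
qed

lemma nf_recursion_unique:
  assumes K1: "nf_recursion K1" and K2: "nf_recursion K2" and "alternating s"
  shows "K1 s = K2 s"
proof -
  have "K1 s $ m $ n = K2 s $ m $ n" if "alternating s" for s m n
    using that
  proof (induction "m + n" arbitrary: s m n rule: less_induct)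
    case less
    have "n > 0 \<Longrightarrow> K1 (nf_times_U s) $ m $ (n - 1) = K2 (nf_times_U s) $ m $ (n - 1)"
      using less.hyps[of m "n - 1"] alternating_nf_times_U[OF less.prems] by simp
    moreover have "m > 0 \<Longrightarrow> K1 (nf_times_S s) $ (m - 1) $ n = K2 (nf_times_S s) $ (m - 1) $ n"
      using less.hyps[of "m - 1" n] alternating_nf_times_S[OF less.prems] by simp
    ultimately show ?case
      using K1 K2 less.prems unfolding nf_recursion_def by (cases "m = 0"; cases "n = 0") simp_all
  qed
  then show ?thesis
    using \<open>alternating s\<close> by (intro fps_ext) simp
qed

lemma Qser_eq_reducing_gf_Nil: "Qser = reducing_gf []"
  unfolding Qser_def reducing_gf_def num_reducing_words_def reducing_words_def q_def
    trivial_in_Gamma_def is_pm_id_def count_U_def count_S_def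
  by simp

subsection \<open>Solving polynomial systems in bivariate power series\<close>

definition eq_below :: "nat \<Rightarrow> 'a fps fps \<Rightarrow> 'a fps fps \<Rightarrow> bool" where
  "eq_below d A B \<longleftrightarrow> (\<forall>i j. i + j < d \<longrightarrow> A $ i $ j = B $ i $ j)"

lemma eq_below_refl [simp]: "eq_below d A A"
  by (simp add: eq_below_def)

lemma eq_below_add: "eq_below d A A' \<Longrightarrow> eq_below d B B' \<Longrightarrow> eq_below d (A + B) (A' + B')"
  by (auto simp: eq_below_def)

lemma fps_fps_mult_nth:
  "((A :: 'a::comm_semiring_1 fps fps) * B) $ m $ n =
     (\<Sum>i=0..m. \<Sum>j=0..n. A $ i $ j * B $ (m - i) $ (n - j))"
  by (simp add: fps_mult_nth fps_sum_nth)

lemma eq_below_mult: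
  fixes A B :: "'a::comm_semiring_1 fps fps"
  assumes "eq_below d A A'" "eq_below d B B'"
  shows "eq_below d (A * B) (A' * B')"
  using assms unfolding eq_below_def fps_fps_mult_nth
  by (intro allI impI sum.cong refl) auto

lemma eq_below_mult_fps_X:
  fixes A :: "'a::comm_semiring_1 fps fps"
  shows "eq_below d A A' \<Longrightarrow> eq_below (Suc d) (fps_X * A) (fps_X * A')"
  by (auto simp: eq_below_def)

lemma eq_below_mult_const_fps_X:
  fixes A :: "'a::comm_semiring_1 fps fps"
  shows "eq_below d A A' \<Longrightarrow> eq_below (Suc d) (fps_const fps_X * A) (fps_const fps_X * A')"
  by (auto simp: eq_below_def fps_mult_left_const_nth)

text \<open>The iterates from \<open>0\<close> stabilise coefficientwise.\<close>

lemma eq_below_contraction_fixpoint: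
  fixes Phi :: "('i \<Rightarrow> 'a::zero fps fps) \<Rightarrow> 'i \<Rightarrow> 'a fps fps"
  assumes contr: "\<And>F G d i. (\<And>j. eq_below d (F j) (G j)) \<Longrightarrow> eq_below (Suc d) (Phi F i) (Phi G i)"
  shows "\<exists>F. Phi F = F"
proof -
  define it where "it k = (Phi ^^ k) (\<lambda>_. 0)" for k
  have it_Suc: "it (Suc k) = Phi (it k)" for k
    by (simp add: it_def)
  have step: "eq_below k (it k i) (it (Suc k) i)" for k i
  proof (induction k arbitrary: i)
    case 0 then show ?case by (simp add: eq_below_def)
  next
    case (Suc k) then show ?case by (simp only: it_Suc) (rule contr)
  qed
  have stable: "eq_below k (it k i) (it l i)" if "k \<le> l" for k l i
    using that
  proof (induction l)
    case (Suc l)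
    then show ?case
      using step[of l i] by (cases "k = Suc l") (auto simp: eq_below_def)
  qed (simp add: eq_below_def)
  define F where "F i = Abs_fps (\<lambda>a. Abs_fps (\<lambda>b. it (a + b + 1) i $ a $ b))" for i
  have F_it: "eq_below k (F i) (it k i)" for k i
    using stable[of "_ + _ + 1" k i] by (auto simp: eq_below_def F_def)
  have "Phi F i $ a $ b = F i $ a $ b" for i a b
  proof -
    have "eq_below (Suc (a + b)) (Phi F i) (it (Suc (a + b)) i)"
      unfolding it_Suc by (intro contr F_it)
    moreover have "eq_below (Suc (a + b)) (F i) (it (Suc (a + b)) i)"
      by (rule F_it)
    ultimately show ?thesis
      by (simp add: eq_below_def)
  qed
  then have "Phi F = F"
    by (intro ext fps_ext) simp
  then show ?thesis by blast
qed

subsection \<open>The cancellation system\<close>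

text \<open>\<open>F (Some a)\<close> is to be read as the generating function of words that cancel a final syllable
  \<open>a\<close> of a normal form for the first time, and \<open>F None\<close> as \<open>Q\<close>; each equation is a first-letter
  decomposition.\<close>

definition cancel_system :: "(syllable option \<Rightarrow> rat fps fps) \<Rightarrow> syllable option \<Rightarrow> rat fps fps" where
  "cancel_system F i = (case i of
      None \<Rightarrow> 1 + xx * F (Some SylU) * F None + yy * F (Some SylS) * F None
    | Some SylS \<Rightarrow> yy + xx * F (Some SylU) * F (Some SylS)
    | Some SylU \<Rightarrow> xx * F (Some SylUU) + yy * F (Some SylS) * F (Some SylU)
    | Some SylUU \<Rightarrow> xx + yy * F (Some SylS) * F (Some SylUU))"

definition cancel_sol :: "syllable option \<Rightarrow> rat fps fps" where
  "cancel_sol = (SOME F. cancel_system F = F)"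

lemma cancel_system_cancel_sol: "cancel_system cancel_sol = cancel_sol"
proof -
  have "\<exists>F. cancel_system F = F"
  proof (rule eq_below_contraction_fixpoint)
    fix F G :: "syllable option \<Rightarrow> rat fps fps" and d i
    assume "\<And>j. eq_below d (F j) (G j)"
    then show "eq_below (Suc d) (cancel_system F i) (cancel_system G i)"
      unfolding cancel_system_def xx_def yy_def
      by (auto split: option.split syllable.split simp: mult.assoc
          intro!: eq_below_add eq_below_mult eq_below_mult_fps_X eq_below_mult_const_fps_X)
  qed
  then show ?thesis
    unfolding cancel_sol_def by (rule someI_ex)
qed

lemma cancel_sol_equations:
  defines "u \<equiv> cancel_sol (Some SylS)" and "v \<equiv> cancel_sol (Some SylU)"
    and "w \<equiv> cancel_sol (Some SylUU)" and "Q \<equiv> cancel_sol None"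
  shows "u = yy + xx * v * u" and "v = xx * w + yy * u * v" and "w = xx + yy * u * w"
    and "Q = 1 + xx * v * Q + yy * u * Q"
  unfolding assms
  by (subst cancel_system_cancel_sol[symmetric], simp add: cancel_system_def)+

definition nf_cancel_gf :: "syllable list \<Rightarrow> rat fps fps" where
  "nf_cancel_gf s = cancel_sol None * (\<Prod>a\<leftarrow>s. cancel_sol (Some a))"

lemma nf_cancel_gf_first_letter:
  "nf_cancel_gf s = (if s = [] then 1 else 0)
     + xx * nf_cancel_gf (nf_times_U s) + yy * nf_cancel_gf (nf_times_S s)"
proof -
  let ?Q = "cancel_sol None" and ?P = "\<lambda>s. \<Prod>a\<leftarrow>s. cancel_sol (Some a)"
  note eqs = cancel_sol_equations[THEN arg_cong, of "\<lambda>z. ?Q * ?P (tl s) * z"]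
  show ?thesis
  proof (cases s rule: nf_times_U.cases)
    case 1 then show ?thesis
      using cancel_sol_equations(4) by (simp add: nf_cancel_gf_def algebra_simps)
  next
    case (2 s') then show ?thesis
      using eqs(1) by (simp add: nf_cancel_gf_def algebra_simps)
  next
    case (3 s') then show ?thesis
      using eqs(2) by (simp add: nf_cancel_gf_def algebra_simps)
  next
    case (4 s') then show ?thesis
      using eqs(3) by (simp add: nf_cancel_gf_def algebra_simps)
  qed
qed

lemma xx_mult_nth: "(xx * F) $ m $ n = (if n = 0 then 0 else F $ m $ (n - 1))"
  by (simp add: xx_def fps_mult_left_const_nth)

lemma yy_mult_nth: "(yy * F) $ m $ n = (if m = 0 then 0 else F $ (m - 1) $ n)"
  by (simp add: yy_def)

lemma nf_recursion_nf_cancel_gf: "nf_recursion nf_cancel_gf"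
  unfolding nf_recursion_def
  by (subst nf_cancel_gf_first_letter) (simp add: xx_mult_nth yy_mult_nth)

lemma Qser_eq_cancel_sol: "Qser = cancel_sol None"
proof -
  have "Qser = reducing_gf []"
    by (rule Qser_eq_reducing_gf_Nil)
  also have "\<dots> = nf_cancel_gf []"
    by (rule nf_recursion_unique[OF nf_recursion_reducing_gf nf_recursion_nf_cancel_gf]) simp
  finally show ?thesis
    by (simp add: nf_cancel_gf_def)
qed

text \<open>With \<open>s = y u\<close> and \<open>t = x v\<close> the system becomes \<open>s (1 - t) = y\<^sup>2\<close>,
  \<open>t (1 - s)\<^sup>2 = x\<^sup>3\<close> and \<open>Q (1 - s - t) = 1\<close>; eliminating \<open>t\<close> leaves a quadratic
  and a cubic in \<open>s\<close> whose resultant is the claimed cubic in \<open>Q\<close>.\<close>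

lemma cancellation_system_cubic:
  fixes x y u v w Q :: "'a::comm_ring_1"
  assumes eu: "u = y + x * v * u" and ev: "v = x * w + y * u * v" and ew: "w = x + y * u * w"
    and eQ: "Q = 1 + x * v * Q + y * u * Q"
  shows "(y^6 - x^6 + 6*y^2*x^3 - 3*y^4 + 2*x^3 + 3*y^2 - 1) * Q^3
      + (x^3*y^2 - y^4 + x^3 + 2*y^2 - 1) * Q^2 + (x^3 - y^2 + 1) * Q + 1 = 0"
proof -
  define s where "s = y * u"
  define t where "t = x * v"
  have vs: "v * (1 - s) = x * w" and ws: "w * (1 - s) = x"
    using ev ew unfolding s_def by (simp_all add: algebra_simps)
  have t_eq: "t * (1 - s)^2 = x^3"
  proof -
    have "t * (1 - s)^2 = x * ((v * (1 - s)) * (1 - s))"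
      unfolding t_def by (simp add: power2_eq_square algebra_simps)
    also have "\<dots> = x * (x * (w * (1 - s)))"
      by (subst vs) (simp add: algebra_simps)
    also have "\<dots> = x^3"
      using ws by (simp add: power3_eq_cube)
    finally show ?thesis .
  qed
  have s_eq: "s * (1 - t) = y^2"
  proof -
    have "s * (1 - t) = y * (u - x * v * u)"
      unfolding s_def t_def by (simp add: algebra_simps)
    also have "\<dots> = y * y"
      using eu by (metis add_diff_cancel_right')
    finally show ?thesis
      by (simp add: power2_eq_square)
  qed
  have Q_eq: "Q * (1 - s - t) = 1"
    using eQ unfolding s_def t_def by (simp add: algebra_simps)
  have quadratic: "Q * s^2 + s - Q * y^2 = 0"
  proof -
    have "Q * s^2 + s - Q * y^2 = Q * (s * (1 - t) - y^2) - s * (Q * (1 - s - t) - 1)"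
      by (simp add: algebra_simps power2_eq_square)
    then show ?thesis
      using s_eq Q_eq by simp
  qed
  have cubic: "Q * (1 - s)^3 - (1 - s)^2 - Q * x^3 = 0"
  proof -
    have "Q * (1 - s)^3 - (1 - s)^2 - Q * x^3
        = Q * (t * (1 - s)^2 - x^3) + (1 - s)^2 * (Q * (1 - s - t) - 1)"
      by (simp add: algebra_simps power2_eq_square power3_eq_cube)
    then show ?thesis
      using t_eq Q_eq by simp
  qed
  define \<alpha> where "\<alpha> = - (1 + 3 * Q + Q * y^2)"
  define \<beta> where "\<beta> = - 1 + Q + 3 * Q * y^2 - Q * x^3"
  have linear: "\<alpha> * s + \<beta> = 0"
  proof -
    have "Q * (1 - s)^3 - (1 - s)^2 - Q * x^3 = (\<alpha> * s + \<beta>) + (3 - s) * (Q * s^2 + s - Q * y^2)"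
      unfolding \<alpha>_def \<beta>_def by (simp add: algebra_simps power2_eq_square power3_eq_cube)
    then show ?thesis
      using cubic quadratic by simp
  qed
  have "(y^6 - x^6 + 6*y^2*x^3 - 3*y^4 + 2*x^3 + 3*y^2 - 1) * Q^3
      + (x^3*y^2 - y^4 + x^3 + 2*y^2 - 1) * Q^2 + (x^3 - y^2 + 1) * Q + 1
      = (\<alpha> * s + \<beta>) * (Q * \<alpha> * s - Q * \<beta> + \<alpha>) - \<alpha>^2 * (Q * s^2 + s - Q * y^2)"
    unfolding \<alpha>_def \<beta>_def
    by (simp add: algebra_simps power2_eq_square power3_eq_cube power_numeral_reduce)
  then show ?thesis
    using quadratic linear by simp
qed

lemma Qser_cubic:
  "(yy^6 - xx^6 + 6*yy^2*xx^3 - 3*yy^4 + 2*xx^3 + 3*yy^2 - 1) * Qser^3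
     + (xx^3*yy^2 - yy^4 + xx^3 + 2*yy^2 - 1) * Qser^2 + (xx^3 - yy^2 + 1) * Qser + 1 = 0"
  unfolding Qser_eq_cancel_sol by (rule cancellation_system_cubic[OF cancel_sol_equations])

subsection \<open>The diagonal \<open>y = x\<close>\<close>

definition diagonal :: "'a::comm_ring_1 fps fps \<Rightarrow> 'a fps" where
  "diagonal F = Abs_fps (\<lambda>N. \<Sum>i\<le>N. F $ (N - i) $ i)"

lemma diagonal_nth: "diagonal F $ N = (\<Sum>i\<le>N. F $ (N - i) $ i)"
  by (simp add: diagonal_def)

lemma diagonal_0 [simp]: "diagonal 0 = 0"
  by (rule fps_ext) (simp add: diagonal_nth)

lemma diagonal_add: "diagonal (F + G) = diagonal F + diagonal G"
  by (rule fps_ext) (simp add: diagonal_nth sum.distrib)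

lemma diagonal_diff: "diagonal (F - G) = diagonal F - diagonal G"
  by (rule fps_ext) (simp add: diagonal_nth sum_subtractf)

lemma diagonal_const: "diagonal (fps_const c) = c"
proof (rule fps_ext)
  fix N :: nat
  have "(\<Sum>i\<le>N. fps_const c $ (N - i) $ i) = (\<Sum>i\<in>{N}. fps_const c $ (N - i) $ i)"
    by (intro sum.mono_neutral_right) auto
  then show "diagonal (fps_const c) $ N = c $ N"
    by (simp add: diagonal_nth)
qed

lemma diagonal_1: "diagonal 1 = 1"
  using diagonal_const[of 1] by simp

lemma diagonal_numeral: "diagonal (numeral k) = numeral k"
  using diagonal_const[of "numeral k"] by (simp add: fps_numeral_fps_const)

lemma diagonal_fps_X: "diagonal fps_X = fps_X"
proof (rule fps_ext)
  fix N :: nat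
  have "(\<Sum>i\<le>N. fps_X $ (N - i) $ i) = (\<Sum>i\<in>{0}. (fps_X :: 'a fps fps) $ (N - i) $ i)"
    by (intro sum.mono_neutral_right) (auto simp: fps_X_def)
  then show "diagonal fps_X $ N = (fps_X :: 'a fps) $ N"
    by (cases "N = 0") (simp_all add: diagonal_nth fps_X_def)
qed

lemma diagonal_mult: "diagonal (F * G) = diagonal F * diagonal G"
proof (rule fps_ext)
  fix N :: nat
  let ?L = "Sigma {..N} (\<lambda>i. Sigma {0..N - i} (\<lambda>a. {0..i}))"
  let ?R = "Sigma {0..N} (\<lambda>k. Sigma {..k} (\<lambda>b. {..N - k}))"
  have "diagonal (F * G) $ N = (\<Sum>(i, a, b) \<in> ?L. F $ a $ b * G $ (N - i - a) $ (i - b))"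
    unfolding diagonal_nth fps_fps_mult_nth by (simp add: sum.Sigma split_def)
  also have "\<dots> = (\<Sum>(k, b, j) \<in> ?R. F $ (k - b) $ b * G $ (N - k - j) $ j)"
    by (rule sum.reindex_bij_witness[where j = "\<lambda>(i, a, b). (a + b, b, i - b)"
          and i = "\<lambda>(k, b, j). (j + b, k - b, b)"]) (auto simp: algebra_simps)
  also have "\<dots> = (diagonal F * diagonal G) $ N"
    unfolding fps_mult_nth diagonal_nth by (simp add: sum.Sigma split_def sum_product)
  finally show "diagonal (F * G) $ N = (diagonal F * diagonal G) $ N" .
qed

lemma diagonal_power: "diagonal (F ^ n) = diagonal F ^ n"
  by (induction n) (simp_all add: diagonal_1 diagonal_mult)

lemma diagonal_xx: "diagonal xx = fps_X"
  unfolding xx_def by (rule diagonal_const)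

lemma diagonal_yy: "diagonal yy = fps_X"
  unfolding yy_def by (rule diagonal_fps_X)

lemmas diagonal_simps = diagonal_add diagonal_diff diagonal_1 diagonal_numeral
  diagonal_mult diagonal_power diagonal_xx diagonal_yy

lemma t_eq_sum_q: "t n = (\<Sum>i\<le>n. q i (n - i))"
proof -
  let ?W = "\<lambda>i. {w. count_U w = i \<and> count_S w = n - i \<and> trivial_in_Gamma w}"
  have "{w. length w = n \<and> trivial_in_Gamma w} = (\<Union>i\<le>n. ?W i)"
    by (auto simp: length_eq_count_U_plus_count_S)
  moreover have "finite (?W i)" for i
    by (rule finite_subset[OF _ finite_words_of_length[of "i + (n - i)"]])
      (auto simp: length_eq_count_U_plus_count_S)
  then have "card (\<Union>i\<le>n. ?W i) = (\<Sum>i\<le>n. card (?W i))"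
    by (intro card_UN_disjoint) auto
  ultimately have "t n = (\<Sum>i\<le>n. card (?W i))"
    unfolding t_def by simp
  then show ?thesis
    by (simp add: q_def count_U_def count_S_def)
qed

lemma Tser_eq: "Tser = Abs_fps (\<lambda>n. \<Sum>i\<le>n. of_nat (q i (n - i)))"
  unfolding Tser_def by (simp add: t_eq_sum_q)

lemma diagonal_Qser: "diagonal Qser = Tser"
  by (rule fps_ext) (simp add: diagonal_nth Tser_eq Qser_def)

lemma Tser_cubic:
  "(6*fps_X^5 - 3*fps_X^4 + 2*fps_X^3 + 3*fps_X^2 - 1) * Tser^3
     + (fps_X^5 - fps_X^4 + fps_X^3 + 2*fps_X^2 - 1) * Tser^2
     + (fps_X^3 - fps_X^2 + 1) * Tser + 1 = 0"
proof -
  have "diagonal ((yy^6 - xx^6 + 6*yy^2*xx^3 - 3*yy^4 + 2*xx^3 + 3*yy^2 - 1) * Qser^3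
     + (xx^3*yy^2 - yy^4 + xx^3 + 2*yy^2 - 1) * Qser^2 + (xx^3 - yy^2 + 1) * Qser + 1) = 0"
    by (simp only: Qser_cubic diagonal_0)
  then have "(fps_X^6 - fps_X^6 + 6*fps_X^2*fps_X^3 - 3*fps_X^4 + 2*fps_X^3 + 3*fps_X^2 - 1) * Tser^3
     + (fps_X^3*fps_X^2 - fps_X^4 + fps_X^3 + 2*fps_X^2 - 1) * Tser^2
     + (fps_X^3 - fps_X^2 + 1) * Tser + 1 = 0"
    by (simp only: diagonal_simps diagonal_Qser)
  then show ?thesis
    by (simp add: algebra_simps power_add[symmetric])
qed

subsection \<open>Irreducibility of the cubic for \<open>T\<close>\<close>

text \<open>The homogenisation of \<open>c\<^sub>3 Z\<^sup>3 + c\<^sub>2 Z\<^sup>2 + c\<^sub>1 Z + 1\<close> at \<open>Z = p / r\<close>.\<close>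

definition homog_cubic :: "'a::comm_ring_1 \<Rightarrow> 'a \<Rightarrow> 'a \<Rightarrow> 'a \<Rightarrow> 'a \<Rightarrow> 'a" where
  "homog_cubic c3 c2 c1 p r = c3 * p^3 + c2 * p^2 * r + c1 * p * r^2 + r^3"

lemma homog_cubic_mult: "homog_cubic c3 c2 c1 (p * g) (r * g) = g^3 * homog_cubic c3 c2 c1 p r"
  unfolding homog_cubic_def by (simp add: algebra_simps power2_eq_square power3_eq_cube)

lemma homog_cubic_linear_relation:
  fixes T :: "'a::comm_ring_1 fps"
  assumes cubic: "fps_of_poly c3 * T^3 + fps_of_poly c2 * T^2 + fps_of_poly c1 * T + 1 = 0"
    and linear: "fps_of_poly r * T + fps_of_poly p = 0"
  shows "homog_cubic c3 c2 c1 (- p) r = 0"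
proof -
  have "fps_of_poly r * T = - fps_of_poly p"
    using linear by (metis eq_neg_iff_add_eq_0)
  then have "fps_of_poly (- p) = fps_of_poly r * T"
    by (simp add: fps_of_poly_uminus)
  then have "fps_of_poly (homog_cubic c3 c2 c1 (- p) r)
      = fps_of_poly r ^ 3 * (fps_of_poly c3 * T^3 + fps_of_poly c2 * T^2 + fps_of_poly c1 * T + 1)"
    unfolding homog_cubic_def fps_of_poly_simps
    by (simp add: algebra_simps power2_eq_square power3_eq_cube)
  then show ?thesis
    using cubic by (simp add: fps_of_poly_eq_iff[of _ 0, simplified])
qed

text \<open>Division of \<open>a\<^sup>2\<close> times the cubic by the quadratic \<open>a Z\<^sup>2 + b Z + c\<close> leaves a linear
  remainder; if the remainder vanishes, the quotient \<open>l\<^sub>1 Z + l\<^sub>0\<close> is a linear factor of the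
  cubic.\<close>

lemma quadratic_relation_imp_homog_cubic_root:
  fixes T :: "'a::idom fps"
  assumes cubic: "fps_of_poly c3 * T^3 + fps_of_poly c2 * T^2 + fps_of_poly c1 * T + 1 = 0"
    and "c3 \<noteq> 0"
    and quadratic: "fps_of_poly a * T^2 + fps_of_poly b * T + fps_of_poly c = 0"
    and nontrivial: "a \<noteq> 0 \<or> b \<noteq> 0 \<or> c \<noteq> 0"
  shows "\<exists>p r. r \<noteq> 0 \<and> homog_cubic c3 c2 c1 p r = 0"
proof (cases "a = 0")
  case True
  then have linear: "fps_of_poly b * T + fps_of_poly c = 0"
    using quadratic by simp
  then have "b \<noteq> 0"
    using nontrivial \<open>a = 0\<close> by (auto simp: fps_of_poly_eq_iff[of _ 0, simplified])
  then show ?thesis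
    using homog_cubic_linear_relation[OF cubic linear] by blast
next
  case False
  define l1 where "l1 = a * c3"
  define l0 where "l0 = a * c2 - b * c3"
  define \<alpha> where "\<alpha> = a^2 * c1 - b * l0 - c * l1"
  define \<beta> where "\<beta> = a^2 - c * l0"
  have "fps_of_poly a ^ 2 * (fps_of_poly c3 * T^3 + fps_of_poly c2 * T^2 + fps_of_poly c1 * T + 1)
      = (fps_of_poly a * T^2 + fps_of_poly b * T + fps_of_poly c) * (fps_of_poly l1 * T + fps_of_poly l0)
        + (fps_of_poly \<alpha> * T + fps_of_poly \<beta>)"
    unfolding \<alpha>_def \<beta>_def l1_def l0_def fps_of_poly_simps
    by (simp add: algebra_simps power2_eq_square power3_eq_cube)
  then have remainder: "fps_of_poly \<alpha> * T + fps_of_poly \<beta> = 0"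
    unfolding cubic quadratic by simp
  show ?thesis
  proof (cases "\<alpha> = 0")
    case False
    then show ?thesis
      using homog_cubic_linear_relation[OF cubic remainder] by blast
  next
    case True
    then have "\<beta> = 0"
      using remainder by (simp add: fps_of_poly_eq_iff[of _ 0, simplified])
    have "a^2 * homog_cubic c3 c2 c1 (- l0) l1
        = (a * l0^2 - b * l0 * l1 + c * l1^2) * (l0 * l1 - l1 * l0) + (\<beta> * l1 - \<alpha> * l0) * l1^2"
      unfolding homog_cubic_def \<alpha>_def \<beta>_def l1_def l0_def
      by (simp add: algebra_simps power2_eq_square power3_eq_cube)
    then have "homog_cubic c3 c2 c1 (- l0) l1 = 0"
      using \<open>\<alpha> = 0\<close> \<open>\<beta> = 0\<close> \<open>a \<noteq> 0\<close> by simp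
    moreover have "l1 \<noteq> 0"
      using \<open>a \<noteq> 0\<close> \<open>c3 \<noteq> 0\<close> by (simp add: l1_def)
    ultimately show ?thesis
      by blast
  qed
qed

definition T_c3 :: "rat poly" where "T_c3 = 6*[:0, 1:]^5 - 3*[:0, 1:]^4 + 2*[:0, 1:]^3 + 3*[:0, 1:]^2 - 1"
definition T_c2 :: "rat poly" where "T_c2 = [:0, 1:]^5 - [:0, 1:]^4 + [:0, 1:]^3 + 2*[:0, 1:]^2 - 1"
definition T_c1 :: "rat poly" where "T_c1 = [:0, 1:]^3 - [:0, 1:]^2 + 1"

lemma rat_cubic_no_root: "(z::rat)^3 + z^2 + 2*z + 7 \<noteq> 0"
proof
  assume root: "z^3 + z^2 + 2*z + 7 = 0"
  obtain n d where nd: "quotient_of z = (n, d)"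
    by (cases "quotient_of z")
  have "d > 0" and "coprime n d" and "z = of_int n / of_int d"
    using quotient_of_denom_pos[OF nd] quotient_of_coprime[OF nd] quotient_of_div[OF nd] by simp_all
  then have n: "of_int n = z * of_int d"
    by simp
  have "(of_int (n^3 + n^2*d + 2*n*d^2 + 7*d^3) :: rat) = (of_int d)^3 * (z^3 + z^2 + 2*z + 7)"
    by (simp add: n algebra_simps power2_eq_square power3_eq_cube)
  then have "(of_int (n^3 + n^2*d + 2*n*d^2 + 7*d^3) :: rat) = 0"
    using root by simp
  then have "n^3 + n^2*d + 2*n*d^2 + 7*d^3 = 0"
    by (simp only: of_int_eq_0_iff)
  moreover have "\<not> (even n \<and> even d)"
    using \<open>coprime n d\<close> coprime_common_divisor[of n d 2] by auto
  then have "odd (n^3 + n^2*d + 2*n*d^2 + 7*d^3)"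
    by auto
  ultimately show False
    by simp
qed

text \<open>For coprime \<open>p\<close>, \<open>r\<close> the equation forces \<open>p \<bar> r\<^sup>3\<close>, so \<open>p\<close> is a constant
  \<open>k\<close>; at \<open>x = 1\<close> it becomes \<open>7k\<^sup>3 + 2k\<^sup>2z + kz\<^sup>2 + z\<^sup>3 = 0\<close>.\<close>

lemma T_homog_cubic_no_root:
  assumes "r \<noteq> 0"
  shows "homog_cubic T_c3 T_c2 T_c1 p r \<noteq> 0"
proof
  assume root: "homog_cubic T_c3 T_c2 T_c1 p r = 0"
  have "gcd p r \<noteq> 0"
    using assms by simp
  then obtain p' r' where pr: "p = p' * gcd p r" "r = r' * gcd p r" and "coprime p' r'"
    using gcd_coprime_exists by blast
  have "homog_cubic T_c3 T_c2 T_c1 (p' * gcd p r) (r' * gcd p r) = gcd p r ^ 3 * homog_cubic T_c3 T_c2 T_c1 p' r'"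
    by (rule homog_cubic_mult)
  then have "gcd p r ^ 3 * homog_cubic T_c3 T_c2 T_c1 p' r' = 0"
    using root by (simp only: pr[symmetric])
  then have root': "homog_cubic T_c3 T_c2 T_c1 p' r' = 0"
    using \<open>gcd p r \<noteq> 0\<close> by (metis mult_eq_0_iff power_eq_0_iff)
  then have "r'^3 = p' * (- (T_c3 * p'^2 + T_c2 * p' * r' + T_c1 * r'^2))"
    unfolding homog_cubic_def by (simp add: algebra_simps power2_eq_square power3_eq_cube eq_neg_iff_add_eq_0)
  then have "p' dvd r'^3"
    by (metis dvd_triv_left)
  then have "is_unit p'"
    using \<open>coprime p' r'\<close> by (simp add: coprime_dvd_mult_left_iff coprime_imp_coprime
        coprime_common_divisor[of p' "r'^3" p'])
  then obtain k where k: "p' = [:k:]" and "is_unit k"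
    by (auto simp: is_unit_poly_iff)
  then have "k \<noteq> 0"
    by auto
  then have "7 * k^3 + 2 * k^2 * poly r' 1 + k * (poly r' 1)^2 + (poly r' 1)^3 = 0"
    using arg_cong[OF root', of "\<lambda>f. poly f 1"] k
    by (simp add: homog_cubic_def T_c3_def T_c2_def T_c1_def)
  moreover have "7 * k^3 + 2 * k^2 * z + k * z^2 + z^3 = k^3 * ((z / k)^3 + (z / k)^2 + 2 * (z / k) + 7)" for z
    using \<open>k \<noteq> 0\<close> by (simp add: field_simps power2_eq_square power3_eq_cube)
  ultimately have "(poly r' 1 / k)^3 + (poly r' 1 / k)^2 + 2 * (poly r' 1 / k) + 7 = 0"
    using \<open>k \<noteq> 0\<close> by simp
  then show False
    using rat_cubic_no_root by blast
qed

lemma Tser_cubic_poly: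
  "fps_of_poly T_c3 * Tser^3 + fps_of_poly T_c2 * Tser^2 + fps_of_poly T_c1 * Tser + 1 = 0"
  using Tser_cubic by (simp add: T_c3_def T_c2_def T_c1_def fps_of_poly_simps)

lemma Tser_no_quadratic_relation:
  "\<not> (\<exists>a b c :: rat poly. (a \<noteq> 0 \<or> b \<noteq> 0 \<or> c \<noteq> 0) \<and>
        fps_of_poly a * Tser^2 + fps_of_poly b * Tser + fps_of_poly c = 0)"
proof -
  have "T_c3 \<noteq> 0"
    by (auto simp: T_c3_def dest: arg_cong[where f = "\<lambda>p. poly p 1"])
  then show ?thesis
    using quadratic_relation_imp_homog_cubic_root[OF Tser_cubic_poly] T_homog_cubic_no_root by blast
qed

subsection \<open>Irreducibility of the cubic for \<open>Q\<close>\<close>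

lemma embed2_nth: "embed2 p $ m = fps_of_poly (coeff p m)"
  by (simp add: embed2_def coeff_map_poly)

lemma embed2_diff: "embed2 (p1 - p2) = embed2 p1 - embed2 p2"
  by (rule fps_ext) (simp add: embed2_nth fps_of_poly_diff)

lemma embed2_pCons: "embed2 (pCons c p) = fps_const (fps_of_poly c) + yy * embed2 p"
  by (rule fps_ext) (auto simp: embed2_nth yy_def coeff_pCons split: nat.splits)

lemma embed2_smult_X: "embed2 (smult [:0, 1:] p) = xx * embed2 p"
  by (rule fps_ext) (simp add: embed2_nth xx_def fps_mult_left_const_nth fps_of_poly_mult)

lemma embed2_mult_y_minus_x: "embed2 ([:- [:0, 1:], 1:] * p) = (yy - xx) * embed2 p"
proof -
  have "[:- [:0, 1:], 1:] * p = smult (- [:0, 1:]) p + pCons 0 ([:1:] * p)"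
    by (rule mult_pCons_left)
  also have "\<dots> = pCons 0 p - smult [:0, 1:] p"
    by (simp only: smult_minus_left) simp
  finally have "[:- [:0, 1:], 1:] * p = pCons 0 p - smult [:0, 1:] p" .
  then show ?thesis
    by (simp only: embed2_diff embed2_pCons embed2_smult_X) (simp add: algebra_simps)
qed

lemma diagonal_embed2: "diagonal (embed2 a) = fps_of_poly (poly a [:0, 1:])"
proof (induction a)
  case 0
  then show ?case by (simp add: embed2_def)
next
  case (pCons c p)
  then show ?case
    by (simp add: embed2_pCons diagonal_add diagonal_const diagonal_mult diagonal_yy
        fps_of_poly_add fps_of_poly_mult)
qed

lemma yy_minus_xx_nonzero: "yy - xx \<noteq> 0"
proof
  assume "yy - xx = 0"
  then have "(yy - xx) $ 1 $ 0 = 0"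
    by simp
  then show False
    by (simp add: yy_def xx_def)
qed

lemma degree_synthetic_div_less:
  "poly p c = 0 \<Longrightarrow> p \<noteq> 0 \<Longrightarrow> degree (synthetic_div p c) < degree p"
  using degree_synthetic_div[of p c] by (cases "degree p") (auto elim: degree_eq_zeroE)

text \<open>If the coefficients all vanish on \<open>y = x\<close>, they share the factor \<open>y - x\<close>, which can be
  cancelled; otherwise restricting to the diagonal gives a nontrivial relation.\<close>

lemma quadratic_relation_diagonal:
  assumes "embed2 a * F^2 + embed2 b * F + embed2 c = 0" and "a \<noteq> 0 \<or> b \<noteq> 0 \<or> c \<noteq> 0"
  shows "\<exists>a' b' c'. (a' \<noteq> 0 \<or> b' \<noteq> 0 \<or> c' \<noteq> 0) \<and>
     fps_of_poly a' * (diagonal F)^2 + fps_of_poly b' * diagonal F + fps_of_poly c' = 0"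
  using assms
proof (induction "degree a + degree b + degree c" arbitrary: a b c rule: less_induct)
  case less
  let ?X = "[:0, 1:] :: rat poly"
  show ?case
  proof (cases "poly a ?X = 0 \<and> poly b ?X = 0 \<and> poly c ?X = 0")
    case False
    have "diagonal (embed2 a * F^2 + embed2 b * F + embed2 c) = 0"
      using less.prems(1) by simp
    then have "fps_of_poly (poly a ?X) * (diagonal F)^2 + fps_of_poly (poly b ?X) * diagonal F
        + fps_of_poly (poly c ?X) = 0"
      by (simp only: diagonal_add diagonal_mult diagonal_power diagonal_embed2)
    with False show ?thesis
      by blast
  next
    case True
    define a' b' c' where "a' = synthetic_div a ?X" and "b' = synthetic_div b ?X"
      and "c' = synthetic_div c ?X"
    have factors: "a = [:- ?X, 1:] * a'" "b = [:- ?X, 1:] * b'" "c = [:- ?X, 1:] * c'"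
      using True synthetic_div_correct'[of ?X a] synthetic_div_correct'[of ?X b]
        synthetic_div_correct'[of ?X c]
      by (simp_all add: a'_def b'_def c'_def)
    have "(yy - xx) * (embed2 a' * F^2 + embed2 b' * F + embed2 c') = 0"
      using less.prems(1) unfolding factors embed2_mult_y_minus_x by (simp add: algebra_simps)
    then have "embed2 a' * F^2 + embed2 b' * F + embed2 c' = 0"
      using yy_minus_xx_nonzero by simp
    moreover have "a' \<noteq> 0 \<or> b' \<noteq> 0 \<or> c' \<noteq> 0"
      using less.prems(2) factors by auto
    moreover have "degree a' + degree b' + degree c' < degree a + degree b + degree c"
      using True less.prems(2) degree_synthetic_div_less[of _ ?X]
        degree_synthetic_div[of a ?X] degree_synthetic_div[of b ?X] degree_synthetic_div[of c ?X]
      unfolding a'_def b'_def c'_def by fastforce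
    ultimately show ?thesis
      using less.hyps by blast
  qed
qed

theorem mainTheorem1:
  shows "(yy^6 - xx^6 + 6*yy^2*xx^3 - 3*yy^4 + 2*xx^3 + 3*yy^2 - 1) * Qser^3
          + (xx^3*yy^2 - yy^4 + xx^3 + 2*yy^2 - 1) * Qser^2
          + (xx^3 - yy^2 + 1) * Qser + 1 = 0
     \<and> \<not> (\<exists>a b c :: rat poly poly. (a \<noteq> 0 \<or> b \<noteq> 0 \<or> c \<noteq> 0) \<and>
            embed2 a * Qser^2 + embed2 b * Qser + embed2 c = 0)
     \<and> Tser = Abs_fps (\<lambda>n. \<Sum>i\<le>n. of_nat (q i (n - i)))
     \<and> (6*fps_X^5 - 3*fps_X^4 + 2*fps_X^3 + 3*fps_X^2 - 1) * Tser^3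
          + (fps_X^5 - fps_X^4 + fps_X^3 + 2*fps_X^2 - 1) * Tser^2
          + (fps_X^3 - fps_X^2 + 1) * Tser + 1 = 0
     \<and> \<not> (\<exists>a b c :: rat poly. (a \<noteq> 0 \<or> b \<noteq> 0 \<or> c \<noteq> 0) \<and>
            fps_of_poly a * Tser^2 + fps_of_poly b * Tser + fps_of_poly c = 0)"
proof -
  have "\<not> (\<exists>a b c :: rat poly poly. (a \<noteq> 0 \<or> b \<noteq> 0 \<or> c \<noteq> 0) \<and>
            embed2 a * Qser^2 + embed2 b * Qser + embed2 c = 0)"
    using quadratic_relation_diagonal[where F = Qser] Tser_no_quadratic_relation
    unfolding diagonal_Qser by blast
  then show ?thesis
    using Qser_cubic Tser_eq Tser_cubic Tser_no_quadratic_relation by blast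
qed

end
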